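(* Let $K,M,N_c,N_g$ be positive integers with $N_g\le N_c$, let $\rho_{tr}>0$, and for each $k\in\{0,\dots,K-1\}$ let $\boldsymbol{\Omega}_k\in\mathbb{R}^{M\times N_g}$ have non-negative entries, let $\phi_k\in\{0,\dots,N_c-1\}$, and let $\varrho_k(\cdot)$ be a real-valued function on the integers. Define $\bar{\boldsymbol{\Omega}}_{k}=[\boldsymbol{\Omega}_k\ \ \mathbf{0}_{M\times(N_c-N_g)}]$ and $\boldsymbol{\Omega}_{k'}^{\phi_{k'}-\phi_k}=\bar{\boldsymbol{\Omega}}_{k'}\boldsymbol{\Pi}_{N_c}^{\phi_{k'}-\phi_k}\mathbf{I}_{N_c\times N_g}$. For each integer $\Delta_\ell$ define the sum mean square error of channel prediction $$\epsilon^{CP}(\Delta_\ell)=\sum_{k=0}^{K-1}\sum_{i=0}^{M-1}\sum_{j=0}^{N_g-1}\left\{[\boldsymbol{\Omega}_k]_{i,j}-\varrho_k^2(\Delta_\ell)\frac{[\boldsymbol{\Omega}_k]_{i,j}^2}{\sum_{k'=0}^{K-1}[\boldsymbol{\Omega}_{k'}^{\phi_{k'}-\phi_k}]_{i,j}+\frac1{\rho_{tr}}}\right\}.$$ Then for every $\Delta_\ell$, $$\epsilon^{CP}(\Delta_\ell)\ge\varepsilon^{CP}(\Delta_\ell)=\sum_{k=0}^{K-1}\sum_{i=0}^{M-1}\sum_{j=0}^{N_g-1}\left\{[\boldsymbol{\Omega}_k]_{i,j}-\varrho_k^2(\Delta_\ell)\frac{[\boldsymbol{\Omega}_k]_{i,j}^2}{[\boldsymbol{\Omega}_k]_{i,j}+\frac1{\rho_{tr}}}\right\},$$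 and equality holds if, for all $k\neq k'$, $\left(\bar{\boldsymbol{\Omega}}_{k}\boldsymbol{\Pi}_{N_c}^{\phi_k}\right)\odot\left(\bar{\boldsymbol{\Omega}}_{k'}\boldsymbol{\Pi}_{N_c}^{\phi_{k'}}\right)=\mathbf{0}$.
   Context: Indices start at $0$. $\langle n\rangle_N$ denotes $n$ modulo $N$. $\boldsymbol{\Pi}_N^{n}=\begin{bmatrix}\mathbf{0}&\mathbf{I}_{N-\langle n\rangle_N}\\ \mathbf{I}_{\langle n\rangle_N}&\mathbf{0}\end{bmatrix}$; $\mathbf{I}_{N\times G}$ is the first $G$ columns of $\mathbf{I}_N$; $\odot$ is the Hadamard product. Interpretation: $\boldsymbol{\Omega}_k$ is the angle-delay channel power matrix of user $k$, $\phi_k$ its pilot phase shift, $\rho_{tr}$ the pilot SNR, $\varrho_k$ the channel temporal correlation function (in the paper $\varrho_k(\Delta)=J_0(2\pi\nu_kT_{sym}\Delta)$), and $\epsilon^{CP}(\Delta_\ell)$ the sum MSE of MMSE prediction of the channel $\Delta_\ell$ symbols after the pilot symbol. *)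

theory Defs
  imports Complex_Main
begin

text \<open>Matrices are represented as functions nat \<Rightarrow> nat \<Rightarrow> real (row, column),
  indices starting at 0, with dimensions carried explicitly.\<close>

definition modN :: "int \<Rightarrow> nat \<Rightarrow> nat" where
  "modN n N = nat (n mod int N)"

text \<open>Cyclic permutation matrix Pi_N^n = [[0, I_{N-<n>}], [I_{<n>}, 0]] (N x N).\<close>
definition perm_mat :: "nat \<Rightarrow> int \<Rightarrow> nat \<Rightarrow> nat \<Rightarrow> real" where
  "perm_mat N n r c =
     (let m = modN n N in
      if r < N - m then (if c = r + m then 1 else 0)
      else (if c = r - (N - m) then 1 else 0))"

text \<open>I_{N x G}: first G columns of I_N.\<close>
definition id_cols :: "nat \<Rightarrow> nat \<Rightarrow> real" where
  "id_cols r c = (if r = c then 1 else 0)"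

definition mat_mult :: "nat \<Rightarrow> (nat \<Rightarrow> nat \<Rightarrow> real) \<Rightarrow> (nat \<Rightarrow> nat \<Rightarrow> real) \<Rightarrow> nat \<Rightarrow> nat \<Rightarrow> real" where
  "mat_mult n A B i j = (\<Sum>r<n. A i r * B r j)"

definition hadamard :: "(nat \<Rightarrow> nat \<Rightarrow> real) \<Rightarrow> (nat \<Rightarrow> nat \<Rightarrow> real) \<Rightarrow> nat \<Rightarrow> nat \<Rightarrow> real" where
  "hadamard A B i j = A i j * B i j"

definition pad :: "nat \<Rightarrow> (nat \<Rightarrow> nat \<Rightarrow> real) \<Rightarrow> nat \<Rightarrow> nat \<Rightarrow> real" where
  "pad Ng \<Omega> i c = (if c < Ng then \<Omega> i c else 0)"

definition shifted :: "nat \<Rightarrow> nat \<Rightarrow> (nat \<Rightarrow> nat \<Rightarrow> real) \<Rightarrow> int \<Rightarrow> nat \<Rightarrow> nat \<Rightarrow> real" where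
  "shifted Nc Ng \<Omega> d = mat_mult Nc (mat_mult Nc (pad Ng \<Omega>) (perm_mat Nc d)) id_cols"

definition eps_CP ::
  "nat \<Rightarrow> nat \<Rightarrow> nat \<Rightarrow> nat \<Rightarrow> real \<Rightarrow> (nat \<Rightarrow> nat \<Rightarrow> nat \<Rightarrow> real) \<Rightarrow> (nat \<Rightarrow> nat)
    \<Rightarrow> (nat \<Rightarrow> int \<Rightarrow> real) \<Rightarrow> int \<Rightarrow> real" where
  "eps_CP K M Nc Ng \<rho> \<Omega> \<phi> corr \<Delta> =
     (\<Sum>k<K. \<Sum>i<M. \<Sum>j<Ng.
        \<Omega> k i j - (corr k \<Delta>)\<^sup>2 * ((\<Omega> k i j)\<^sup>2 /
          ((\<Sum>k'<K. shifted Nc Ng (\<Omega> k') (int (\<phi> k') - int (\<phi> k)) i j) + 1 / \<rho>)))"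

definition veps_CP ::
  "nat \<Rightarrow> nat \<Rightarrow> nat \<Rightarrow> real \<Rightarrow> (nat \<Rightarrow> nat \<Rightarrow> nat \<Rightarrow> real)
    \<Rightarrow> (nat \<Rightarrow> int \<Rightarrow> real) \<Rightarrow> int \<Rightarrow> real" where
  "veps_CP K M Ng \<rho> \<Omega> corr \<Delta> =
     (\<Sum>k<K. \<Sum>i<M. \<Sum>j<Ng.
        \<Omega> k i j - (corr k \<Delta>)\<^sup>2 * ((\<Omega> k i j)\<^sup>2 / (\<Omega> k i j + 1 / \<rho>)))"

end

theory Submission
  imports Defs
begin

text \<open>Column j of the shifted power matrix of user k' seen by user k is column
  (j - (\<phi>k' - \<phi>k)) mod Nc of the padded matrix of k'. Hence the interference sum in the
  denominator of each summand of eps_CP contains the user's own entry (k' = k) plus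
  non-negative contributions, which only decreases the subtracted term. Under the
  orthogonality condition the contribution of k' \<noteq> k vanishes wherever the own entry is
  non-zero (read the Hadamard product at column (j + \<phi>k) mod Nc), so the two sums agree
  term by term.\<close>

lemma perm_mat_entry:
  assumes "r < N" "c < N"
  shows "perm_mat N d r c = (if int r = (int c - d) mod int N then 1 else 0)"
proof -
  define m where "m = modN d N"
  have d_mod: "d mod int N = int m"
    using assms by (simp add: m_def modN_def)
  have "m < N"
    using assms d_mod by (metis of_nat_less_iff pos_mod_bound of_nat_0_less_iff order.strict_trans1 le0)
  have "(int c - d) mod int N = (int c - int m) mod int N"
    by (metis d_mod mod_diff_right_eq)
  also have "\<dots> = (if m \<le> c then int c - int m else int c - int m + int N)"
  proof (cases "m \<le> c")
    case True
    then show ?thesis using assms \<open>m < N\<close> by (simp add: mod_pos_pos_trivial)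
  next
    case False
    have "(int c - int m) mod int N = (int c - int m + int N) mod int N" by simp
    also have "\<dots> = int c - int m + int N"
      using False assms \<open>m < N\<close> by (intro mod_pos_pos_trivial) auto
    finally show ?thesis using False by simp
  qed
  finally show ?thesis
    unfolding perm_mat_def Let_def m_def[symmetric] using assms \<open>m < N\<close> by auto
qed

lemma mat_mult_perm_mat:
  assumes "c < N"
  shows "mat_mult N A (perm_mat N d) i c = A i (nat ((int c - d) mod int N))"
proof -
  define r0 where "r0 = nat ((int c - d) mod int N)"
  have "r0 < N" and r0: "int r0 = (int c - d) mod int N"
    using assms by (auto simp: r0_def nat_less_iff)
  have "mat_mult N A (perm_mat N d) i c = (\<Sum>r<N. if r = r0 then A i r else 0)"
    unfolding mat_mult_def
    by (rule sum.cong) (use assms in \<open>auto simp: perm_mat_entry r0[symmetric]\<close>)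
  also have "\<dots> = A i r0"
    using \<open>r0 < N\<close> by simp
  finally show ?thesis by (simp add: r0_def)
qed

lemma mat_mult_id_cols:
  assumes "j < N"
  shows "mat_mult N B id_cols i j = B i j"
proof -
  have "mat_mult N B id_cols i j = (\<Sum>r<N. if r = j then B i r else 0)"
    unfolding mat_mult_def id_cols_def by (rule sum.cong) auto
  then show ?thesis using assms by simp
qed

lemma shifted_eq_mat_mult:
  "j < Nc \<Longrightarrow> shifted Nc Ng W d i j = mat_mult Nc (pad Ng W) (perm_mat Nc d) i j"
  unfolding shifted_def by (simp add: mat_mult_id_cols)

lemma shifted_eq_pad:
  "j < Nc \<Longrightarrow> shifted Nc Ng W d i j = pad Ng W i (nat ((int j - d) mod int Nc))"
  by (simp add: shifted_eq_mat_mult mat_mult_perm_mat)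

lemma shifted_zero:
  "j < Ng \<Longrightarrow> Ng \<le> Nc \<Longrightarrow> shifted Nc Ng W 0 i j = W i j"
  by (simp add: shifted_eq_pad pad_def)

lemma shifted_nonneg:
  assumes "Ng \<le> Nc" "j < Ng" "\<And>c. c < Ng \<Longrightarrow> 0 \<le> W i c"
  shows "0 \<le> shifted Nc Ng W d i j"
  using assms by (simp add: shifted_eq_pad pad_def)

lemma mult_mat_mult_perm_mat_diff_eq_zero:
  assumes "j < N"
    and "hadamard (mat_mult N A (perm_mat N a)) (mat_mult N B (perm_mat N b)) i
           (nat ((int j + a) mod int N)) = 0"
  shows "A i j * mat_mult N B (perm_mat N (b - a)) i j = 0"
proof -
  define c where "c = nat ((int j + a) mod int N)"
  have "c < N" and c: "int c = (int j + a) mod int N"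
    using assms(1) by (auto simp: c_def nat_less_iff)
  have "(int c - a) mod int N = (int j + a - a) mod int N"
    unfolding c by (rule mod_diff_left_eq)
  then have col_A: "(int c - a) mod int N = int j"
    using assms(1) by simp
  have "(int c - b) mod int N = (int j + a - b) mod int N"
    unfolding c by (rule mod_diff_left_eq)
  then have col_B: "(int c - b) mod int N = (int j - (b - a)) mod int N"
    by (simp add: algebra_simps)
  show ?thesis
    using assms \<open>c < N\<close> by (simp add: hadamard_def mat_mult_perm_mat col_A col_B c_def[symmetric])
qed

lemma square_divide_add_antimono:
  fixes w D r :: real
  assumes "0 \<le> w" "w \<le> D" "0 < r"
  shows "w\<^sup>2 / (D + r) \<le> w\<^sup>2 / (w + r)"
  using assms by (intro divide_left_mono) auto

definition interference ::
  "nat \<Rightarrow> nat \<Rightarrow> nat \<Rightarrow> (nat \<Rightarrow> nat \<Rightarrow> nat \<Rightarrow> real) \<Rightarrow> (nat \<Rightarrow> nat) \<Rightarrow> nat \<Rightarrow> nat \<Rightarrow> nat \<Rightarrow> real"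
  where "interference K Nc Ng \<Omega> \<phi> k i j =
    (\<Sum>k'<K. shifted Nc Ng (\<Omega> k') (int (\<phi> k') - int (\<phi> k)) i j)"

lemma eps_CP_interference:
  "eps_CP K M Nc Ng \<rho> \<Omega> \<phi> corr \<Delta> =
     (\<Sum>k<K. \<Sum>i<M. \<Sum>j<Ng. \<Omega> k i j - (corr k \<Delta>)\<^sup>2 *
        ((\<Omega> k i j)\<^sup>2 / (interference K Nc Ng \<Omega> \<phi> k i j + 1 / \<rho>)))"
  by (simp add: eps_CP_def interference_def)

lemma interference_ge_own:
  assumes "Ng \<le> Nc" "k < K" "i < M" "j < Ng"
    and "\<And>k i j. k < K \<Longrightarrow> i < M \<Longrightarrow> j < Ng \<Longrightarrow> 0 \<le> \<Omega> k i j"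
  shows "\<Omega> k i j \<le> interference K Nc Ng \<Omega> \<phi> k i j"
proof -
  have "\<Omega> k i j = shifted Nc Ng (\<Omega> k) (int (\<phi> k) - int (\<phi> k)) i j"
    using assms by (simp add: shifted_zero)
  also have "\<dots> \<le> interference K Nc Ng \<Omega> \<phi> k i j"
    unfolding interference_def
    by (rule member_le_sum) (use assms in \<open>auto intro: shifted_nonneg\<close>)
  finally show ?thesis .
qed

lemma interference_eq_own:
  assumes "Ng \<le> Nc" "k < K" "j < Ng" "\<Omega> k i j \<noteq> 0"
    and orth: "\<And>k'. k' < K \<Longrightarrow> k' \<noteq> k \<Longrightarrow> \<forall>c<Nc.
           hadamard (mat_mult Nc (pad Ng (\<Omega> k)) (perm_mat Nc (int (\<phi> k))))
                    (mat_mult Nc (pad Ng (\<Omega> k')) (perm_mat Nc (int (\<phi> k')))) i c = 0"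
  shows "interference K Nc Ng \<Omega> \<phi> k i j = \<Omega> k i j"
proof -
  have "j < Nc" using assms by simp
  have other: "shifted Nc Ng (\<Omega> k') (int (\<phi> k') - int (\<phi> k)) i j = 0"
    if "k' < K" "k' \<noteq> k" for k'
  proof -
    have "pad Ng (\<Omega> k) i j * shifted Nc Ng (\<Omega> k') (int (\<phi> k') - int (\<phi> k)) i j = 0"
      unfolding shifted_eq_mat_mult[OF \<open>j < Nc\<close>]
      by (rule mult_mat_mult_perm_mat_diff_eq_zero)
         (use \<open>j < Nc\<close> orth[OF that] in \<open>auto simp: nat_less_iff\<close>)
    then show ?thesis using assms by (simp add: pad_def)
  qed
  have "interference K Nc Ng \<Omega> \<phi> k i j = (\<Sum>k'<K. if k' = k then \<Omega> k i j else 0)"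
    unfolding interference_def
    by (rule sum.cong) (use assms other in \<open>auto simp: shifted_zero\<close>)
  also have "\<dots> = \<Omega> k i j" using assms by simp
  finally show ?thesis .
qed

theorem proposition4:
  fixes K M Nc Ng :: nat and \<rho> :: real
    and \<Omega> :: "nat \<Rightarrow> nat \<Rightarrow> nat \<Rightarrow> real" and \<phi> :: "nat \<Rightarrow> nat"
    and corr :: "nat \<Rightarrow> int \<Rightarrow> real"
  assumes "0 < K" "0 < M" "0 < Nc" "0 < Ng" "Ng \<le> Nc" "0 < \<rho>"
    and "\<And>k i j. k < K \<Longrightarrow> i < M \<Longrightarrow> j < Ng \<Longrightarrow> 0 \<le> \<Omega> k i j"
    and "\<And>k. k < K \<Longrightarrow> \<phi> k < Nc"
  shows "\<forall>\<Delta>::int.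
           eps_CP K M Nc Ng \<rho> \<Omega> \<phi> corr \<Delta> \<ge> veps_CP K M Ng \<rho> \<Omega> corr \<Delta>
         \<and> ((\<forall>k<K. \<forall>k'<K. k \<noteq> k' \<longrightarrow> (\<forall>i<M. \<forall>c<Nc.
                hadamard (mat_mult Nc (pad Ng (\<Omega> k)) (perm_mat Nc (int (\<phi> k))))
                         (mat_mult Nc (pad Ng (\<Omega> k')) (perm_mat Nc (int (\<phi> k')))) i c = 0))
            \<longrightarrow> eps_CP K M Nc Ng \<rho> \<Omega> \<phi> corr \<Delta> = veps_CP K M Ng \<rho> \<Omega> corr \<Delta>)"
proof (intro allI conjI impI)
  fix \<Delta> :: int
  let ?D = "interference K Nc Ng \<Omega> \<phi>"
  have "(corr k \<Delta>)\<^sup>2 * ((\<Omega> k i j)\<^sup>2 / (?D k i j + 1 / \<rho>))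
      \<le> (corr k \<Delta>)\<^sup>2 * ((\<Omega> k i j)\<^sup>2 / (\<Omega> k i j + 1 / \<rho>))"
    if "k < K" "i < M" "j < Ng" for k i j
    using that assms interference_ge_own[of Ng Nc k K i M j \<Omega> \<phi>]
    by (intro mult_left_mono square_divide_add_antimono) auto
  then show "veps_CP K M Ng \<rho> \<Omega> corr \<Delta> \<le> eps_CP K M Nc Ng \<rho> \<Omega> \<phi> corr \<Delta>"
    unfolding veps_CP_def eps_CP_interference by (intro sum_mono diff_left_mono) auto
next
  fix \<Delta> :: int
  assume orth: "\<forall>k<K. \<forall>k'<K. k \<noteq> k' \<longrightarrow> (\<forall>i<M. \<forall>c<Nc.
                hadamard (mat_mult Nc (pad Ng (\<Omega> k)) (perm_mat Nc (int (\<phi> k))))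
                         (mat_mult Nc (pad Ng (\<Omega> k')) (perm_mat Nc (int (\<phi> k')))) i c = 0)"
  have "(\<Omega> k i j)\<^sup>2 / (interference K Nc Ng \<Omega> \<phi> k i j + 1 / \<rho>)
      = (\<Omega> k i j)\<^sup>2 / (\<Omega> k i j + 1 / \<rho>)"
    if "k < K" "i < M" "j < Ng" for k i j
    using that assms(5) orth interference_eq_own[of Ng Nc k K j \<Omega> i \<phi>]
    by (cases "\<Omega> k i j = 0") auto
  then show "eps_CP K M Nc Ng \<rho> \<Omega> \<phi> corr \<Delta> = veps_CP K M Ng \<rho> \<Omega> corr \<Delta>"
    unfolding veps_CP_def eps_CP_interference by (intro sum.cong refl) auto
qed

end
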